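(* Let $N\ge2$, let $\mathcal{A}=(a_{i_1\cdots i_N})\in\mathbb{C}^{d_1\times\cdots\times d_N}$, and for each $l\in\{1,\dots,N\}$ let $\mathbf{U}^{(l)}=(u^{(l)}_{i_l'i_l})\in\mathbb{C}^{d_l'\times d_l}$. Let $\mathcal{B}=\mathcal{A}\times_1\mathbf{U}^{(1)}\times_2\cdots\times_N\mathbf{U}^{(N)}\in\mathbb{C}^{d_1'\times\cdots\times d_N'}$. Then for every $k\in\{1,\dots,N-1\}$, $n\in\{1,\dots,k\}$, $m\in\{1,\dots,N-k\}$ and all sequences $R=(r_1,\dots,r_k)$, $C=(c_1,\dots,c_{N-k})$ of distinct integers with $\{r_1,\dots,r_k\}\cup\{c_1,\dots,c_{N-k}\}=\{1,\dots,N\}$, $$\mathbf{B}_{(R,n;C,m)}=\big(\mathbf{U}^{(r_{n+1})}\otimes\cdots\otimes\mathbf{U}^{(r_k)}\otimes\mathbf{U}^{(r_1)}\otimes\cdots\otimes\mathbf{U}^{(r_n)}\big)\,\mathbf{A}_{(R,n;C,m)}\,\big(\mathbf{U}^{(c_{m+1})}\otimes\cdots\otimes\mathbf{U}^{(c_{N-k})}\otimes\mathbf{U}^{(c_1)}\otimes\cdots\otimes\mathbf{U}^{(c_m)}\big)^{\rm T},$$ where $\mathbf{A}_{(R,n;C,m)}$ and $\mathbf{B}_{(R,n;C,m)}$ are the mixed $(R,n;C,m)$-mode matrix unfoldings of $\mathcal{A}$ and $\mathcal{B}$ and $\otimes$ is the Kronecker product.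
   Context: The $k$-mode product of $\mathcal{A}\in\mathbb{C}^{d_1\times\cdots\times d_N}$ with $\mathbf{U}=(u_{i_k'i_k})\in\mathbb{C}^{d_k'\times d_k}$ is the tensor $\mathcal{A}\times_k\mathbf{U}$ of size $d_1\times\cdots\times d_{k-1}\times d_k'\times d_{k+1}\times\cdots\times d_N$ with entries $\sum_{i_k=1}^{d_k}a_{i_1\cdots i_k\cdots i_N}u_{i_k'i_k}$. Index map: for positive integers $D_1,\dots,D_k$, $n\in\{1,\dots,k\}$, $j_s\in\{1,\dots,D_s\}$, $$\iota_n^{(D_1,\dots,D_k)}(j_1,\dots,j_k)=\Big(\prod_{s=1}^{n}D_s\Big)\sum_{s'=n+1}^{k}\Big((j_{s'}-1)\prod_{s''=s'+1}^{k}D_{s''}\Big)+\sum_{s'=1}^{n}\Big((j_{s'}-1)\prod_{s''=s'+1}^{n}D_{s''}\Big)+1$$ (empty products $1$, empty sums $0$). Mixed mode matrix unfolding: for $\mathcal{X}=(x_{i_1\cdots i_N})\in\mathbb{C}^{D_1\times\cdots\times D_N}$ and $R,C,n,m$ as in the claim, $\mathbf{X}_{(R,n;C,m)}\in\mathbb{C}^{(D_{r_1}\cdots D_{r_k})\times(D_{c_1}\cdots D_{c_{N-k}})}$ has entry $x_{i_1\cdots i_N}$ in row $\iota_n^{(D_{r_1},\dots,D_{r_k})}(i_{r_1},\dots,i_{r_k})$ and column $\iota_m^{(D_{c_1},\dots,D_{c_{N-k}})}(i_{c_1},\dots,i_{c_{N-k}})$. *)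

theory Defs
  imports Complex_Main "Jordan_Normal_Form.Matrix"
begin

(* Conventions: tensors are functions from index lists (1-based indices, list position l
   corresponds to mode l+1) to complex numbers, together with a dimension list.
   Matrices are Jordan_Normal_Form matrices (0-based); the paper's 1-based entry (p,q)
   is the JNF entry (p-1,q-1). Mode numbers in R, C are 1-based as in the paper. *)

definition iota :: "nat \<Rightarrow> nat list \<Rightarrow> nat list \<Rightarrow> nat" where
  "iota n D j =
     (\<Prod>s<n. D ! s) *
       (\<Sum>s'\<in>{n..<length D}. (j ! s' - 1) * (\<Prod>s''\<in>{Suc s'..<length D}. D ! s''))
     + (\<Sum>s'<n. (j ! s' - 1) * (\<Prod>s''\<in>{Suc s'..<n}. D ! s'')) + 1"

definition valid_index :: "nat list \<Rightarrow> nat list \<Rightarrow> bool" where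
  "valid_index D i \<longleftrightarrow> length i = length D \<and> (\<forall>l<length D. 1 \<le> i ! l \<and> i ! l \<le> D ! l)"

text \<open>k-mode product (mode k+1 in the paper's numbering, k is the 0-based list position).\<close>
definition mode_prod :: "(nat list \<Rightarrow> complex) \<Rightarrow> nat \<Rightarrow> complex mat \<Rightarrow> (nat list \<Rightarrow> complex)" where
  "mode_prod A k U = (\<lambda>i. \<Sum>t<dim_col U. A (i[k := Suc t]) * U $$ (i ! k - 1, t))"

definition multi_mode_prod :: "(nat list \<Rightarrow> complex) \<Rightarrow> complex mat list \<Rightarrow> (nat list \<Rightarrow> complex)" where
  "multi_mode_prod A Us = foldl (\<lambda>T l. mode_prod T l (Us ! l)) A [0..<length Us]"

definition mixed_unfolding ::
  "(nat list \<Rightarrow> complex) \<Rightarrow> nat list \<Rightarrow> nat list \<Rightarrow> nat \<Rightarrow> nat list \<Rightarrow> nat \<Rightarrow> complex mat" where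
  "mixed_unfolding X D R n C m =
     mat (\<Prod>r\<leftarrow>R. D ! (r - 1)) (\<Prod>c\<leftarrow>C. D ! (c - 1))
       (\<lambda>(p, q). X (THE i. valid_index D i
            \<and> iota n (map (\<lambda>r. D ! (r - 1)) R) (map (\<lambda>r. i ! (r - 1)) R) = Suc p
            \<and> iota m (map (\<lambda>c. D ! (c - 1)) C) (map (\<lambda>c. i ! (c - 1)) C) = Suc q))"

definition kron :: "'a::semiring_1 mat \<Rightarrow> 'a mat \<Rightarrow> 'a mat" where
  "kron A B = mat (dim_row A * dim_row B) (dim_col A * dim_col B)
     (\<lambda>(i, j). A $$ (i div dim_row B, j div dim_col B) * B $$ (i mod dim_row B, j mod dim_col B))"

fun kron_list :: "'a::semiring_1 mat list \<Rightarrow> 'a mat" where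
  "kron_list [] = 1\<^sub>m 1"
| "kron_list (A # As) = kron A (kron_list As)"

end

theory Submission
  imports Defs
begin

text \<open>
  The paper's index map reads the digits j - 1 of a multi-index in the mixed radix given by the
  dimensions, most significant digit first, after rotating the modes to r_(n+1), ..., r_k, r_1, ..., r_n;
  this is exactly the digit order in which the Kronecker product U^(r_(n+1)) \<otimes> ... \<otimes> U^(r_n)
  indexes its rows and columns, so its entry at the positions of multi-indices i and j is the
  product of the entries u^(r)_(i_r j_r) over r in R.
  The map sending a valid multi-index to its (row, column) position in the unfolding is injective by
  uniqueness of mixed-radix digits, hence bijective by counting.  Reindexing the double sum of the
  triple matrix product over multi-indices j then turns the entry at the position of i into
  \<Sum>_j a_j \<Prod>_l u^(l)_(i_l j_l), which is the entry b_i of the multi-mode product.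
\<close>

fun mixed_radix_value :: "nat list \<Rightarrow> nat list \<Rightarrow> nat" where
  "mixed_radix_value (b # bs) (x # xs) = x * prod_list bs + mixed_radix_value bs xs"
| "mixed_radix_value _ _ = 0"

lemma mixed_radix_value_less:
  "list_all2 (<) xs bs \<Longrightarrow> mixed_radix_value bs xs < prod_list bs"
proof (induction rule: list_all2_induct)
  case Nil
  then show ?case by simp
next
  case (Cons x xs b bs)
  have "mixed_radix_value (b # bs) (x # xs) < Suc x * prod_list bs"
    using Cons.IH by simp
  also have "\<dots> \<le> b * prod_list bs"
    using Cons.hyps by (intro mult_right_mono) auto
  finally show ?case by simp
qed

lemma mixed_radix_value_Cons_div_mod:
  assumes "list_all2 (<) xs bs"
  shows "mixed_radix_value (b # bs) (x # xs) div prod_list bs = x"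
    and "mixed_radix_value (b # bs) (x # xs) mod prod_list bs = mixed_radix_value bs xs"
  using mixed_radix_value_less[OF assms] by auto

lemma mixed_radix_value_inj:
  "list_all2 (<) xs bs \<Longrightarrow> list_all2 (<) ys bs \<Longrightarrow>
   mixed_radix_value bs xs = mixed_radix_value bs ys \<Longrightarrow> xs = ys"
proof (induction bs arbitrary: xs ys)
  case Nil
  then show ?case by simp
next
  case (Cons b bs)
  then obtain x xs' y ys' where xy: "xs = x # xs'" "ys = y # ys'"
    and digits: "list_all2 (<) xs' bs" "list_all2 (<) ys' bs"
    by (auto simp: list_all2_Cons2)
  then show ?case
    using Cons.prems(3) Cons.IH[OF digits] mixed_radix_value_Cons_div_mod[OF digits(1), of b x]
      mixed_radix_value_Cons_div_mod[OF digits(2), of b y]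
    by metis
qed

lemma mixed_radix_value_append:
  "length xs = length bs \<Longrightarrow>
   mixed_radix_value (bs @ cs) (xs @ ys) = mixed_radix_value bs xs * prod_list cs + mixed_radix_value cs ys"
  by (induction xs bs rule: list_induct2') (simp_all add: algebra_simps)

lemma mixed_radix_value_eq_sum:
  "length xs = length bs \<Longrightarrow>
   mixed_radix_value bs xs = (\<Sum>s<length bs. xs ! s * (\<Prod>t\<in>{Suc s..<length bs}. bs ! t))"
proof (induction xs bs rule: list_induct2)
  case Nil
  then show ?case by simp
next
  case (Cons x xs b bs)
  have shift: "(\<Prod>t\<in>{Suc s..<Suc (length bs)}. (b # bs) ! t) = (\<Prod>t\<in>{s..<length bs}. bs ! t)" for s
    using prod.shift_bounds_nat_ivl[of "(!) (b # bs)" s 1 "length bs"] by simp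
  have "prod_list bs = (\<Prod>t\<in>{0..<length bs}. bs ! t)"
    by (simp add: prod.list_conv_set_nth atLeast0LessThan)
  then show ?case
    using Cons unfolding length_Cons sum.lessThan_Suc_shift shift nth_Cons_0 nth_Cons_Suc
    by (simp add: atLeast0LessThan)
qed

lemma rotate_eq_drop_take: "n \<le> length xs \<Longrightarrow> rotate n xs = drop n xs @ take n xs"
  by (cases "n = length xs") (simp_all add: rotate_drop_take)

lemma prod_list_rotate: "prod_list (rotate n xs) = prod_list (xs :: 'a :: comm_monoid_mult list)"
  by (metis rotate_drop_take append_take_drop_id prod_list.append mult.commute)

lemma iota_eq_mixed_radix_value:
  assumes len: "length js = length bs" and n: "n \<le> length bs"
  shows "iota n bs js = Suc (mixed_radix_value (rotate n bs) (rotate n (map (\<lambda>j. j - 1) js)))"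
proof -
  let ?js = "map (\<lambda>j. j - 1) js"
  let ?L = "length bs"
  have high: "mixed_radix_value (drop n bs) (drop n ?js)
      = (\<Sum>s\<in>{n..<?L}. (js ! s - 1) * (\<Prod>t\<in>{Suc s..<?L}. bs ! t))"
  proof -
    have "mixed_radix_value (drop n bs) (drop n ?js)
        = (\<Sum>s<?L - n. (js ! (s + n) - 1) * (\<Prod>t\<in>{Suc s..<?L - n}. bs ! (t + n)))"
      using n len by (subst mixed_radix_value_eq_sum) (auto simp: add.commute intro!: sum.cong prod.cong)
    also have "\<dots> = (\<Sum>s<?L - n. (js ! (s + n) - 1) * (\<Prod>t\<in>{Suc s + n..<?L - n + n}. bs ! t))"
      by (intro sum.cong refl, subst prod.shift_bounds_nat_ivl) simp
    also have "\<dots> = (\<Sum>s\<in>{0 + n..<?L - n + n}. (js ! s - 1) * (\<Prod>t\<in>{Suc s..<?L - n + n}. bs ! t))"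
      by (subst sum.shift_bounds_nat_ivl) (simp add: atLeast0LessThan)
    finally show ?thesis
      using n by simp
  qed
  have low: "mixed_radix_value (take n bs) (take n ?js)
      = (\<Sum>s<n. (js ! s - 1) * (\<Prod>t\<in>{Suc s..<n}. bs ! t))"
    using n len by (subst mixed_radix_value_eq_sum) (auto simp: min_def intro!: sum.cong prod.cong)
  have "prod_list (take n bs) = (\<Prod>s<n. bs ! s)"
    using n by (simp add: prod.list_conv_set_nth min_def atLeast0LessThan)
  moreover have "mixed_radix_value (rotate n bs) (rotate n ?js)
      = mixed_radix_value (drop n bs) (drop n ?js) * prod_list (take n bs)
        + mixed_radix_value (take n bs) (take n ?js)"
    using len n by (simp add: rotate_eq_drop_take mixed_radix_value_append)
  ultimately show ?thesis
    unfolding iota_def high low by (simp add: mult.commute)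
qed

lemma dim_kron [simp]:
  "dim_row (kron A B) = dim_row A * dim_row B" "dim_col (kron A B) = dim_col A * dim_col B"
  unfolding kron_def by simp_all

lemma dim_kron_list [simp]:
  "dim_row (kron_list Ms) = prod_list (map dim_row Ms)"
  "dim_col (kron_list Ms) = prod_list (map dim_col Ms)"
  by (induction Ms) simp_all

lemma kron_list_mixed_radix_entry:
  assumes "list_all2 (<) is (map dim_row Ms)" and "list_all2 (<) js (map dim_col Ms)"
  shows "kron_list Ms $$ (mixed_radix_value (map dim_row Ms) is, mixed_radix_value (map dim_col Ms) js)
       = (\<Prod>l<length Ms. Ms ! l $$ (is ! l, js ! l))"
  using assms
proof (induction Ms arbitrary: "is" js)
  case Nil
  then show ?case by simp
next
  case (Cons M Ms)
  then obtain i is' j js' where ij: "is = i # is'" "js = j # js'"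
    and digits: "list_all2 (<) is' (map dim_row Ms)" "list_all2 (<) js' (map dim_col Ms)"
    by (auto simp: list_all2_Cons2)
  have "kron_list (M # Ms) $$ (mixed_radix_value (map dim_row (M # Ms)) is,
                               mixed_radix_value (map dim_col (M # Ms)) js)
      = M $$ (i, j) * kron_list Ms $$ (mixed_radix_value (map dim_row Ms) is',
                                       mixed_radix_value (map dim_col Ms) js')"
    using mixed_radix_value_less[OF Cons.prems(1)] mixed_radix_value_less[OF Cons.prems(2)]
      mixed_radix_value_Cons_div_mod[OF digits(1)] mixed_radix_value_Cons_div_mod[OF digits(2)]
    by (simp add: kron_def ij)
  then show ?case
    using Cons.IH[OF digits] unfolding ij length_Cons prod.lessThan_Suc_shift by simp
qed

lemma index_mult_mult_transpose_mat:
  assumes "p < dim_row K" "q < dim_row L" "dim_col K = dim_row M" "dim_col M = dim_col L"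
  shows "(K * M * transpose_mat L) $$ (p, q) =
     (\<Sum>a<dim_row M. \<Sum>b<dim_col M. K $$ (p, a) * M $$ (a, b) * L $$ (q, b))"
proof -
  have "(K * M * transpose_mat L) $$ (p, q) = (\<Sum>b<dim_col M. (K * M) $$ (p, b) * L $$ (q, b))"
    using assms by (simp add: scalar_prod_def atLeast0LessThan)
  also have "\<dots> = (\<Sum>b<dim_col M. \<Sum>a<dim_row M. K $$ (p, a) * M $$ (a, b) * L $$ (q, b))"
    using assms by (intro sum.cong refl) (simp add: scalar_prod_def atLeast0LessThan sum_distrib_right)
  finally show ?thesis
    by (simp only: sum.swap[of _ "{..<dim_col M}"])
qed

lemma valid_index_iff_list_all2: "valid_index D i \<longleftrightarrow> list_all2 (\<lambda>x b. 1 \<le> x \<and> x \<le> b) i D"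
  unfolding valid_index_def list_all2_conv_all_nth by auto

lemma valid_indices_Nil: "{i. valid_index [] i} = {[]}"
  by (simp add: valid_index_def)

lemma valid_indices_snoc:
  "{i. valid_index (D @ [b]) i} = (\<lambda>(i, t). i @ [Suc t]) ` ({i. valid_index D i} \<times> {..<b})"
proof -
  have "i \<in> (\<lambda>(i, t). i @ [Suc t]) ` ({i. valid_index D i} \<times> {..<b})"
    if valid: "valid_index (D @ [b]) i" for i
  proof -
    obtain i' x where "i = i' @ [x]" "valid_index D i'" "1 \<le> x" "x \<le> b"
      using valid by (auto simp: valid_index_iff_list_all2 list_all2_append2 list_all2_Cons2)
    then show ?thesis
      by (auto intro!: image_eqI[where x = "(i', x - 1)"])
  qed
  then show ?thesis
    by (auto simp: valid_index_iff_list_all2 list_all2_appendI)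
qed

lemma inj_on_snoc_Suc: "inj_on (\<lambda>(i, t). i @ [Suc t]) S"
  by (auto intro: inj_onI)

lemma card_valid_indices: "card {i. valid_index D i} = prod_list D"
proof (induction D rule: rev_induct)
  case Nil
  then show ?case by (simp add: valid_indices_Nil)
next
  case (snoc b D)
  then show ?case
    by (simp add: valid_indices_snoc card_image[OF inj_on_snoc_Suc] card_cartesian_product)
qed

lemma foldl_mode_prod_eq_sum:
  assumes dims: "\<And>l. l < L \<Longrightarrow> dim_col (Us ! l) = d ! l"
    and L: "L \<le> length d" "L \<le> length i"
  shows "foldl (\<lambda>T l. mode_prod T l (Us ! l)) A [0..<L] i
       = (\<Sum>j | valid_index (take L d) j. A (j @ drop L i) * (\<Prod>l<L. Us ! l $$ (i ! l - 1, j ! l - 1)))"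
  using dims L
proof (induction L arbitrary: i)
  case 0
  then show ?case by (simp add: valid_indices_Nil)
next
  case (Suc L)
  let ?F = "foldl (\<lambda>T l. mode_prod T l (Us ! l)) A [0..<L]"
  let ?V = "{j. valid_index (take L d) j}"
  let ?u = "\<lambda>j l. Us ! l $$ (i ! l - 1, j ! l - 1)"
  have take_Suc_d: "take (Suc L) d = take L d @ [d ! L]"
    using Suc.prems by (simp add: take_Suc_conv_app_nth)
  have len_V: "length j = L" if "j \<in> ?V" for j
    using that Suc.prems by (simp add: valid_index_def)
  have "foldl (\<lambda>T l. mode_prod T l (Us ! l)) A [0..<Suc L] i
      = (\<Sum>t<d ! L. ?F (i[L := Suc t]) * Us ! L $$ (i ! L - 1, t))"
    using Suc.prems by (simp add: mode_prod_def)
  also have "\<dots> = (\<Sum>t<d ! L. \<Sum>j\<in>?V. A ((j @ [Suc t]) @ drop (Suc L) i)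
                                      * (\<Prod>l<L. ?u j l) * Us ! L $$ (i ! L - 1, t))"
    using Suc by (simp add: sum_distrib_right Cons_nth_drop_Suc[symmetric] drop_update_cancel
                       nth_list_update)
  also have "\<dots> = (\<Sum>(j, t)\<in>?V \<times> {..<d ! L}. A ((j @ [Suc t]) @ drop (Suc L) i)
                                      * (\<Prod>l<Suc L. ?u (j @ [Suc t]) l))"
    by (subst sum.swap, subst sum.cartesian_product)
       (auto intro!: sum.cong prod.cong simp: len_V nth_append mult.assoc)
  also have "\<dots> = (\<Sum>j | valid_index (take (Suc L) d) j. A (j @ drop (Suc L) i) * (\<Prod>l<Suc L. ?u j l))"
    unfolding take_Suc_d valid_indices_snoc sum.reindex[OF inj_on_snoc_Suc]
    by (simp add: case_prod_unfold)
  finally show ?case .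
qed

lemma multi_mode_prod_eq_sum:
  assumes "length Us = length d" "length i = length d"
    and "\<And>l. l < length d \<Longrightarrow> dim_col (Us ! l) = d ! l"
  shows "multi_mode_prod A Us i
       = (\<Sum>j | valid_index d j. A j * (\<Prod>l<length d. Us ! l $$ (i ! l - 1, j ! l - 1)))"
  using foldl_mode_prod_eq_sum[of "length d" Us d i A] assms
  by (simp add: multi_mode_prod_def)

definition unfolding_index :: "nat list \<Rightarrow> nat list \<Rightarrow> nat \<Rightarrow> nat list \<Rightarrow> nat" where
  "unfolding_index D R n i =
     mixed_radix_value (map (\<lambda>r. D ! (r - 1)) (rotate n R)) (map (\<lambda>r. i ! (r - 1) - 1) (rotate n R))"

lemma iota_eq_Suc_unfolding_index:
  "n \<le> length R \<Longrightarrow>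
   iota n (map (\<lambda>r. D ! (r - 1)) R) (map (\<lambda>r. i ! (r - 1)) R) = Suc (unfolding_index D R n i)"
  unfolding unfolding_index_def by (simp add: iota_eq_mixed_radix_value rotate_map comp_def)

lemma unfolding_index_digits:
  assumes "valid_index D i" "set R \<subseteq> {1..length D}"
  shows "list_all2 (<) (map (\<lambda>r. i ! (r - 1) - 1) (rotate n R)) (map (\<lambda>r. D ! (r - 1)) (rotate n R))"
proof -
  have "i ! (r - 1) - 1 < D ! (r - 1)" if "r \<in> set R" for r
  proof -
    have "r - 1 < length D"
      using that assms(2) by force
    then have "1 \<le> i ! (r - 1)" "i ! (r - 1) \<le> D ! (r - 1)"
      using assms(1) by (auto simp: valid_index_def)
    then show ?thesis by linarith
  qed
  then show ?thesis
    by (simp add: list_all2_map1 list_all2_map2 list_all2_same)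
qed

lemma unfolding_index_less:
  "valid_index D i \<Longrightarrow> set R \<subseteq> {1..length D} \<Longrightarrow>
   unfolding_index D R n i < prod_list (map (\<lambda>r. D ! (r - 1)) R)"
  using mixed_radix_value_less[OF unfolding_index_digits]
  by (simp add: unfolding_index_def prod_list_rotate flip: rotate_map)

lemma unfolding_index_eq_imp_nth_eq:
  assumes "valid_index D i" "valid_index D i'" "set R \<subseteq> {1..length D}"
    and "unfolding_index D R n i = unfolding_index D R n i'" "r \<in> set R"
  shows "i ! (r - 1) = i' ! (r - 1)"
proof -
  have "map (\<lambda>r. i ! (r - 1) - 1) (rotate n R) = map (\<lambda>r. i' ! (r - 1) - 1) (rotate n R)"
    using mixed_radix_value_inj[OF unfolding_index_digits[OF assms(1,3)] unfolding_index_digits[OF assms(2,3)]]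
      assms(4) unfolding unfolding_index_def by blast
  moreover have "1 \<le> i ! (r - 1)" "1 \<le> i' ! (r - 1)"
    using assms by (force simp: valid_index_def)+
  ultimately show ?thesis
    using assms(5) by auto
qed

lemma inj_on_unfolding_indices:
  assumes "set (R @ C) = {1..length D}"
  shows "inj_on (\<lambda>i. (unfolding_index D R n i, unfolding_index D C m i)) {i. valid_index D i}"
proof (rule inj_onI, rule nth_equalityI)
  fix i i' assume i: "i \<in> {i. valid_index D i}" and i': "i' \<in> {i. valid_index D i}"
    and eq: "(unfolding_index D R n i, unfolding_index D C m i) = (unfolding_index D R n i', unfolding_index D C m i')"
  then show "length i = length i'" by (simp add: valid_index_def)
  fix l assume "l < length i"
  then have "Suc l \<in> set R \<or> Suc l \<in> set C"
    using i assms by (auto simp: valid_index_def)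
  then show "i ! l = i' ! l"
    using unfolding_index_eq_imp_nth_eq[of D i i' R n "Suc l"]
      unfolding_index_eq_imp_nth_eq[of D i i' C m "Suc l"] i i' eq assms by auto
qed

lemma prod_list_split_by_modes:
  fixes D :: "nat list"
  assumes "distinct (R @ C)" "set (R @ C) = {1..length D}"
  shows "prod_list (map (\<lambda>r. D ! (r - 1)) R) * prod_list (map (\<lambda>c. D ! (c - 1)) C) = prod_list D"
proof -
  have "prod_list (map (\<lambda>r. D ! (r - 1)) R) * prod_list (map (\<lambda>c. D ! (c - 1)) C)
      = prod_list (map (\<lambda>r. D ! (r - 1)) (R @ C))"
    by simp
  also have "\<dots> = (\<Prod>r\<in>{1..length D}. D ! (r - 1))"
    by (metis assms prod.distinct_set_conv_list)
  also have "\<dots> = prod_list D"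
    by (simp add: prod.atLeast1_atMost_eq prod.list_conv_set_nth[of D, simplified] atLeast0LessThan)
  finally show ?thesis .
qed

lemma bij_betw_unfolding_indices:
  assumes "distinct (R @ C)" "set (R @ C) = {1..length D}"
  shows "bij_betw (\<lambda>i. (unfolding_index D R n i, unfolding_index D C m i)) {i. valid_index D i}
           ({..<prod_list (map (\<lambda>r. D ! (r - 1)) R)} \<times> {..<prod_list (map (\<lambda>c. D ! (c - 1)) C)})"
proof -
  let ?ui = "\<lambda>i. (unfolding_index D R n i, unfolding_index D C m i)"
  let ?box = "{..<prod_list (map (\<lambda>r. D ! (r - 1)) R)} \<times> {..<prod_list (map (\<lambda>c. D ! (c - 1)) C)}"
  have "set R \<subseteq> {1..length D}" "set C \<subseteq> {1..length D}"
    using assms(2) by auto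
  then have "?ui ` {i. valid_index D i} \<subseteq> ?box"
    using unfolding_index_less by blast
  moreover have "card (?ui ` {i. valid_index D i}) = card ?box"
    by (simp only: card_image[OF inj_on_unfolding_indices[OF assms(2)]] card_valid_indices
                   card_cartesian_product card_lessThan prod_list_split_by_modes[OF assms])
  ultimately have "?ui ` {i. valid_index D i} = ?box"
    by (intro card_subset_eq) simp_all
  then show ?thesis
    using inj_on_unfolding_indices[OF assms(2)] by (simp add: bij_betw_def)
qed

lemma mixed_unfolding_at_unfolding_index:
  assumes "valid_index D i" "set (R @ C) = {1..length D}" "n \<le> length R" "m \<le> length C"
  shows "mixed_unfolding X D R n C m $$ (unfolding_index D R n i, unfolding_index D C m i) = X i"
proof -
  have iota_R: "iota n (map (\<lambda>r. D ! (r - 1)) R) (map (\<lambda>r. i' ! (r - 1)) R) = Suc (unfolding_index D R n i')"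
    and iota_C: "iota m (map (\<lambda>c. D ! (c - 1)) C) (map (\<lambda>c. i' ! (c - 1)) C) = Suc (unfolding_index D C m i')"
    for i'
    using iota_eq_Suc_unfolding_index assms(3,4) by blast+
  have "(THE i'. valid_index D i'
            \<and> iota n (map (\<lambda>r. D ! (r - 1)) R) (map (\<lambda>r. i' ! (r - 1)) R) = Suc (unfolding_index D R n i)
            \<and> iota m (map (\<lambda>c. D ! (c - 1)) C) (map (\<lambda>c. i' ! (c - 1)) C) = Suc (unfolding_index D C m i))
        = i"
    unfolding iota_R iota_C
    using assms(1) inj_on_unfolding_indices[OF assms(2), of n m]
    by (intro the_equality) (auto simp: inj_on_def)
  moreover have "set R \<subseteq> {1..length D}" "set C \<subseteq> {1..length D}"
    using assms(2) by auto
  ultimately show ?thesis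
    using assms(1) unfolding_index_less by (simp add: mixed_unfolding_def)
qed

lemma dim_kron_list_modes:
  fixes Us :: "'a :: semiring_1 mat list"
  assumes "set R \<subseteq> {1..length Us}"
  shows "dim_row (kron_list (map (\<lambda>r. Us ! (r - 1)) (rotate n R))) = prod_list (map (\<lambda>r. map dim_row Us ! (r - 1)) R)"
    and "dim_col (kron_list (map (\<lambda>r. Us ! (r - 1)) (rotate n R))) = prod_list (map (\<lambda>r. map dim_col Us ! (r - 1)) R)"
proof -
  have map_eq: "map (\<lambda>r. map f Us ! (r - 1)) R = map (\<lambda>r. f (Us ! (r - 1))) R" for f :: "'a mat \<Rightarrow> nat"
    using assms by force
  show "dim_row (kron_list (map (\<lambda>r. Us ! (r - 1)) (rotate n R))) = prod_list (map (\<lambda>r. map dim_row Us ! (r - 1)) R)"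
    unfolding map_eq by (simp add: prod_list_rotate comp_def flip: rotate_map)
  show "dim_col (kron_list (map (\<lambda>r. Us ! (r - 1)) (rotate n R))) = prod_list (map (\<lambda>r. map dim_col Us ! (r - 1)) R)"
    unfolding map_eq by (simp add: prod_list_rotate comp_def flip: rotate_map)
qed

lemma kron_list_at_unfolding_indices:
  assumes "valid_index (map dim_row Us) i" "valid_index (map dim_col Us) j"
    and "distinct R" "set R \<subseteq> {1..length Us}"
  shows "kron_list (map (\<lambda>r. Us ! (r - 1)) (rotate n R))
           $$ (unfolding_index (map dim_row Us) R n i, unfolding_index (map dim_col Us) R n j)
       = (\<Prod>r\<in>set R. Us ! (r - 1) $$ (i ! (r - 1) - 1, j ! (r - 1) - 1))"
proof -
  let ?Ms = "map (\<lambda>r. Us ! (r - 1)) (rotate n R)"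
  have R: "set R \<subseteq> {1..length (map dim_row Us)}" "set R \<subseteq> {1..length (map dim_col Us)}"
    using assms(4) by simp_all
  have rows: "map dim_row ?Ms = map (\<lambda>r. map dim_row Us ! (r - 1)) (rotate n R)"
    and cols: "map dim_col ?Ms = map (\<lambda>r. map dim_col Us ! (r - 1)) (rotate n R)"
    using assms(4) by force+
  have "kron_list ?Ms $$ (unfolding_index (map dim_row Us) R n i, unfolding_index (map dim_col Us) R n j)
      = (\<Prod>l<length ?Ms. ?Ms ! l $$ (map (\<lambda>r. i ! (r - 1) - 1) (rotate n R) ! l,
                                       map (\<lambda>r. j ! (r - 1) - 1) (rotate n R) ! l))"
    using kron_list_mixed_radix_entry[of _ ?Ms, unfolded rows cols,
        OF unfolding_index_digits[OF assms(1) R(1)] unfolding_index_digits[OF assms(2) R(2)]]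
    unfolding unfolding_index_def .
  also have "\<dots> = (\<Prod>r\<leftarrow>rotate n R. Us ! (r - 1) $$ (i ! (r - 1) - 1, j ! (r - 1) - 1))"
    by (simp add: prod.list_conv_set_nth atLeast0LessThan)
  also have "\<dots> = (\<Prod>r\<in>set R. Us ! (r - 1) $$ (i ! (r - 1) - 1, j ! (r - 1) - 1))"
    using prod.distinct_set_conv_list[of "rotate n R", symmetric] assms(3) by simp
  finally show ?thesis .
qed

lemma kron_mult_mixed_unfolding_entry:
  assumes perm: "distinct (R @ C)" "set (R @ C) = {1..length Us}"
    and "n \<le> length R" "m \<le> length C" and i: "valid_index (map dim_row Us) i"
  shows "(kron_list (map (\<lambda>r. Us ! (r - 1)) (rotate n R)) * mixed_unfolding A (map dim_col Us) R n C m
           * transpose_mat (kron_list (map (\<lambda>c. Us ! (c - 1)) (rotate m C))))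
         $$ (unfolding_index (map dim_row Us) R n i, unfolding_index (map dim_row Us) C m i)
       = multi_mode_prod A Us i"
proof -
  let ?D = "map dim_row Us" and ?E = "map dim_col Us"
  let ?V = "{j. valid_index ?E j}"
  let ?u = "\<lambda>j r. Us ! (r - 1) $$ (i ! (r - 1) - 1, j ! (r - 1) - 1)"
  let ?rowR = "unfolding_index ?E R n" and ?colC = "unfolding_index ?E C m"
  define KR where "KR = kron_list (map (\<lambda>r. Us ! (r - 1)) (rotate n R))"
  define KC where "KC = kron_list (map (\<lambda>c. Us ! (c - 1)) (rotate m C))"
  define M where "M = mixed_unfolding A ?E R n C m"
  define p q where "p = unfolding_index ?D R n i" and "q = unfolding_index ?D C m i"
  have R: "set R \<subseteq> {1..length Us}" and C: "set C \<subseteq> {1..length Us}"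
    using perm(2) by auto
  have dim_M: "dim_row M = prod_list (map (\<lambda>r. ?E ! (r - 1)) R)"
              "dim_col M = prod_list (map (\<lambda>c. ?E ! (c - 1)) C)"
    by (simp_all add: M_def mixed_unfolding_def)
  have bij: "bij_betw (\<lambda>j. (?rowR j, ?colC j)) ?V ({..<dim_row M} \<times> {..<dim_col M})"
    using bij_betw_unfolding_indices[of R C ?E n m] perm by (simp add: dim_M)
  have "p < dim_row KR" "q < dim_row KC"
    using unfolding_index_less[OF i] R C dim_kron_list_modes(1)[OF R] dim_kron_list_modes(1)[OF C]
    by (simp_all add: KR_def KC_def p_def q_def)
  moreover have "dim_col KR = dim_row M" "dim_col M = dim_col KC"
    using dim_kron_list_modes(2)[OF R] dim_kron_list_modes(2)[OF C]
    by (simp_all add: KR_def KC_def dim_M)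
  ultimately have "(KR * M * transpose_mat KC) $$ (p, q)
      = (\<Sum>a<dim_row M. \<Sum>b<dim_col M. KR $$ (p, a) * M $$ (a, b) * KC $$ (q, b))"
    by (rule index_mult_mult_transpose_mat)
  also have "\<dots> = (\<Sum>(a, b)\<in>{..<dim_row M} \<times> {..<dim_col M}. KR $$ (p, a) * M $$ (a, b) * KC $$ (q, b))"
    by (rule sum.cartesian_product)
  also have "\<dots> = (\<Sum>j\<in>?V. KR $$ (p, ?rowR j) * M $$ (?rowR j, ?colC j) * KC $$ (q, ?colC j))"
    using sum.reindex_bij_betw[OF bij, of "\<lambda>(a, b). KR $$ (p, a) * M $$ (a, b) * KC $$ (q, b)"]
    by simp
  also have "\<dots> = (\<Sum>j\<in>?V. prod (?u j) (set R) * A j * prod (?u j) (set C))"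
    using kron_list_at_unfolding_indices[OF i] mixed_unfolding_at_unfolding_index perm assms(3,4) R C
    by (intro sum.cong refl) (simp add: KR_def KC_def M_def p_def q_def)
  also have "\<dots> = (\<Sum>j\<in>?V. A j * prod (?u j) {1..length Us})"
    using perm by (intro sum.cong refl) (simp add: prod.union_disjoint[symmetric])
  also have "\<dots> = (\<Sum>j\<in>?V. A j * (\<Prod>l<length Us. Us ! l $$ (i ! l - 1, j ! l - 1)))"
    by (simp add: prod.atLeast1_atMost_eq)
  also have "\<dots> = multi_mode_prod A Us i"
    using multi_mode_prod_eq_sum[of Us "map dim_col Us" i A] i by (simp add: valid_index_def)
  finally show ?thesis
    by (simp add: KR_def KC_def M_def p_def q_def)
qed

lemma eq_mat_on_unfolding_indices:
  assumes perm: "distinct (R @ C)" "set (R @ C) = {1..length D}"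
    and dims: "dim_row M = prod_list (map (\<lambda>r. D ! (r - 1)) R)" "dim_col M = prod_list (map (\<lambda>c. D ! (c - 1)) C)"
      "dim_row M' = dim_row M" "dim_col M' = dim_col M"
    and entries: "\<And>i. valid_index D i \<Longrightarrow>
      M $$ (unfolding_index D R n i, unfolding_index D C m i) = M' $$ (unfolding_index D R n i, unfolding_index D C m i)"
  shows "M = M'"
proof (rule eq_matI)
  fix p q assume "p < dim_row M'" "q < dim_col M'"
  then have "(p, q) \<in> (\<lambda>i. (unfolding_index D R n i, unfolding_index D C m i)) ` {i. valid_index D i}"
    using bij_betw_imp_surj_on[OF bij_betw_unfolding_indices[OF perm, of n m]] dims by simp
  then obtain i where "valid_index D i" "p = unfolding_index D R n i" "q = unfolding_index D C m i"
    by blast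
  then show "M $$ (p, q) = M' $$ (p, q)"
    using entries by simp
qed (use dims in simp_all)

lemma mixed_unfolding_multi_mode_prod:
  assumes perm: "distinct (R @ C)" "set (R @ C) = {1..length Us}"
    and n: "n \<le> length R" and m: "m \<le> length C"
  shows "mixed_unfolding (multi_mode_prod A Us) (map dim_row Us) R n C m =
         kron_list (map (\<lambda>r. Us ! (r - 1)) (rotate n R))
         * mixed_unfolding A (map dim_col Us) R n C m
         * transpose_mat (kron_list (map (\<lambda>c. Us ! (c - 1)) (rotate m C)))"
    (is "?B = ?KR * ?A * transpose_mat ?KC")
proof (rule eq_mat_on_unfolding_indices)
  show "distinct (R @ C)" "set (R @ C) = {1..length (map dim_row Us)}"
    using perm by simp_all
  have "set R \<subseteq> {1..length Us}" "set C \<subseteq> {1..length Us}"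
    using perm by auto
  then show "dim_row (?KR * ?A * transpose_mat ?KC) = dim_row ?B"
    and "dim_col (?KR * ?A * transpose_mat ?KC) = dim_col ?B"
    using dim_kron_list_modes(1) by (simp_all add: mixed_unfolding_def)
  fix i assume i: "valid_index (map dim_row Us) i"
  then show "?B $$ (unfolding_index (map dim_row Us) R n i, unfolding_index (map dim_row Us) C m i)
      = (?KR * ?A * transpose_mat ?KC)
          $$ (unfolding_index (map dim_row Us) R n i, unfolding_index (map dim_row Us) C m i)"
    using mixed_unfolding_at_unfolding_index[OF i _ n m] kron_mult_mixed_unfolding_entry[OF perm n m i] perm
    by simp
qed (simp_all add: mixed_unfolding_def)

theorem theorem3:
  fixes A :: "nat list \<Rightarrow> complex" and d :: "nat list" and Us :: "complex mat list"
    and N k n m :: nat and R C :: "nat list"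
  assumes "N \<ge> 2" and "length d = N" and "length Us = N"
    and "\<forall>l<N. 0 < d ! l \<and> 0 < dim_row (Us ! l) \<and> dim_col (Us ! l) = d ! l"
    and "1 \<le> k" and "k \<le> N - 1" and "1 \<le> n" and "n \<le> k" and "1 \<le> m" and "m \<le> N - k"
    and "length R = k" and "length C = N - k" and "distinct R" and "distinct C"
    and "set R \<union> set C = {1..N}"
  shows "mixed_unfolding (multi_mode_prod A Us) (map dim_row Us) R n C m =
         kron_list (map (\<lambda>r. Us ! (r - 1)) (drop n R @ take n R))
         * mixed_unfolding A d R n C m
         * transpose_mat (kron_list (map (\<lambda>c. Us ! (c - 1)) (drop m C @ take m C)))"
proof -
  have d: "d = map dim_col Us"
    using assms(2-4) by (intro nth_equalityI) auto
  have "card (set (R @ C)) = length (R @ C)"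
    using assms(6,11,12,15) by simp
  then have distinct_RC: "distinct (R @ C)"
    by (rule card_distinct)
  have set_RC: "set (R @ C) = {1..length Us}"
    using assms(3,15) by simp
  have rotate: "drop n R @ take n R = rotate n R" "drop m C @ take m C = rotate m C"
    using assms(8,10-12) by (simp_all add: rotate_eq_drop_take)
  show ?thesis
    unfolding d rotate
    by (rule mixed_unfolding_multi_mode_prod[OF distinct_RC set_RC]) (use assms(8,10-12) in simp_all)
qed

end
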